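(* Let $\mathcal{Q}=(X,\mathcal{R},C)$ be a chemical reaction system with food set $F\subseteq X$, and let $(X_1,\mathcal{R}_1),\dots,(X_k,\mathcal{R}_k)$ be inhibition pairs with $X_i\subseteq X$, $\mathcal{R}_i\subseteq\mathcal{R}$. For every subset $J\subseteq[k]$, if $s(\mathcal{R}^J\cap\mathcal{R}_J)$ is non-empty, then $s(\mathcal{R}^J\cap\mathcal{R}_J)$ is a $u$-RAF.
   Context: A chemical reaction system (CRS) $\mathcal{Q}=(X,\mathcal{R},C)$ consists of a finite set $X$ of molecule types, a finite set $\mathcal{R}$ of reactions, each reaction $r$ having a set of reactants $\rho(r)\subseteq X$ and a set of products $\pi(r)\subseteq X$, and a catalysis set $C\subseteq X\times\mathcal{R}$ ($(x,r)\in C$ means $x$ catalyzes $r$); a food set $F\subseteq X$ is given. For $\mathcal{R}'\subseteq\mathcal{R}$, the closure $\mathrm{cl}_{\mathcal{R}'}(F)$ is the smallest set $W\subseteq X$ with $F\subseteq W$ such that $\pi(r)\subseteq W$ for every $r\in\mathcal{R}'$ with $\rho(r)\subseteq W$. A set $\mathcal{R}'\subseteq\mathcal{R}$ is an RAF if it is non-empty and every $r\in\mathcal{R}'$ satisfies $\rho(r)\subseteq\mathrm{cl}_{\mathcal{R}'}(F)$ and there is $x\in\mathrm{cl}_{\mathcal{R}'}(F)$ with $(x,r)\in C$. A union of RAFs is an RAF; for $\mathcal{R}^*\subseteq\mathcal{R}$, $s(\mathcal{R}^* )$ denotes the unique maximal RAF contained in $\mathcal{R}^*$ (the union of all RAFs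 contained in $\mathcal{R}^*$), or $\emptyset$ if $\mathcal{R}^*$ contains no RAF. The support of a reaction is ${\rm supp}(r)=\rho(r)\cup\pi(r)$, and ${\rm supp}(\mathcal{R}')=\bigcup_{r\in\mathcal{R}'}{\rm supp}(r)$. Inhibition pairs $(X_i,\mathcal{R}_i)$, $i\in[k]=\{1,\dots,k\}$, mean every molecule in $X_i$ inhibits every reaction in $\mathcal{R}_i$. A subset $\mathcal{R}'\subseteq\mathcal{R}$ is a $u$-RAF (uninhibited RAF) if (u-1) $\mathcal{R}'$ is an RAF, and (u-2) for every $i\in[k]$, $\mathcal{R}'\cap\mathcal{R}_i\neq\emptyset$ implies ${\rm supp}(\mathcal{R}')\cap X_i=\emptyset$. For $J\subseteq[k]$: $\mathcal{R}^J=\{r\in\mathcal{R}: {\rm supp}(r)\cap X_j=\emptyset \text{ for all } j\notin J\}$ and $\mathcal{R}_J=\{r\in\mathcal{R}: r\notin\mathcal{R}_j\text{ for all } j\in J\}$. *)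

theory Defs
  imports Main
begin

text \<open>A chemical reaction system: molecule types X, reactions R with reactants rho r
and products pi r, catalysis set C, food set F.\<close>

definition CRS :: "'x set \<Rightarrow> 'r set \<Rightarrow> ('r \<Rightarrow> 'x set) \<Rightarrow> ('r \<Rightarrow> 'x set) \<Rightarrow> ('x \<times> 'r) set \<Rightarrow> 'x set \<Rightarrow> bool" where
  "CRS X R rho pi C F \<longleftrightarrow> finite X \<and> finite R \<and>
     (\<forall>r\<in>R. rho r \<subseteq> X \<and> pi r \<subseteq> X) \<and> C \<subseteq> X \<times> R \<and> F \<subseteq> X"

definition closure :: "('r \<Rightarrow> 'x set) \<Rightarrow> ('r \<Rightarrow> 'x set) \<Rightarrow> 'r set \<Rightarrow> 'x set \<Rightarrow> 'x set" where
  "closure rho pi R' F = \<Inter> {W. F \<subseteq> W \<and> (\<forall>r\<in>R'. rho r \<subseteq> W \<longrightarrow> pi r \<subseteq> W)}"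

definition is_RAF :: "'r set \<Rightarrow> ('r \<Rightarrow> 'x set) \<Rightarrow> ('r \<Rightarrow> 'x set) \<Rightarrow> ('x \<times> 'r) set \<Rightarrow> 'x set \<Rightarrow> 'r set \<Rightarrow> bool" where
  "is_RAF R rho pi C F R' \<longleftrightarrow> R' \<subseteq> R \<and> R' \<noteq> {} \<and>
     (\<forall>r\<in>R'. rho r \<subseteq> closure rho pi R' F \<and> (\<exists>x\<in>closure rho pi R' F. (x, r) \<in> C))"

text \<open>Maximal RAF contained in Rs (union of all RAFs contained in Rs; empty if none).\<close>
definition maxRAF :: "'r set \<Rightarrow> ('r \<Rightarrow> 'x set) \<Rightarrow> ('r \<Rightarrow> 'x set) \<Rightarrow> ('x \<times> 'r) set \<Rightarrow> 'x set \<Rightarrow> 'r set \<Rightarrow> 'r set" where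
  "maxRAF R rho pi C F Rs = \<Union> {R'. R' \<subseteq> Rs \<and> is_RAF R rho pi C F R'}"

definition supp :: "('r \<Rightarrow> 'x set) \<Rightarrow> ('r \<Rightarrow> 'x set) \<Rightarrow> 'r \<Rightarrow> 'x set" where
  "supp rho pi r = rho r \<union> pi r"

definition supp_set :: "('r \<Rightarrow> 'x set) \<Rightarrow> ('r \<Rightarrow> 'x set) \<Rightarrow> 'r set \<Rightarrow> 'x set" where
  "supp_set rho pi R' = (\<Union>r\<in>R'. supp rho pi r)"

definition is_uRAF :: "'r set \<Rightarrow> ('r \<Rightarrow> 'x set) \<Rightarrow> ('r \<Rightarrow> 'x set) \<Rightarrow> ('x \<times> 'r) set \<Rightarrow> 'x set
     \<Rightarrow> nat \<Rightarrow> (nat \<Rightarrow> 'x set) \<Rightarrow> (nat \<Rightarrow> 'r set) \<Rightarrow> 'r set \<Rightarrow> bool" where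
  "is_uRAF R rho pi C F k Xi Ri R' \<longleftrightarrow> is_RAF R rho pi C F R' \<and>
     (\<forall>i\<in>{1..k}. R' \<inter> Ri i \<noteq> {} \<longrightarrow> supp_set rho pi R' \<inter> Xi i = {})"

definition R_upper :: "'r set \<Rightarrow> ('r \<Rightarrow> 'x set) \<Rightarrow> ('r \<Rightarrow> 'x set) \<Rightarrow> nat \<Rightarrow> (nat \<Rightarrow> 'x set) \<Rightarrow> nat set \<Rightarrow> 'r set" where
  "R_upper R rho pi k Xi J = {r\<in>R. \<forall>j\<in>{1..k} - J. supp rho pi r \<inter> Xi j = {}}"

definition R_lower :: "'r set \<Rightarrow> (nat \<Rightarrow> 'r set) \<Rightarrow> nat set \<Rightarrow> 'r set" where
  "R_lower R Ri J = {r\<in>R. \<forall>j\<in>J. r \<notin> Ri j}"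

end

theory Submission
  imports Defs
begin

(* The theorem splits along the two conditions defining a u-RAF.
   (u-1): the maximal RAF s(Rs) inside any set Rs, when non-empty, is itself an RAF.
   This is the usual "union of RAFs is an RAF" argument, resting only on the
   monotonicity of the closure operator in the reaction set.
   (u-2): this condition holds for EVERY subset S of R^J \<inter> R_J.  If S meets R_i, then
   i \<notin> J (reactions of R_J avoid every R_j with j \<in> J), so by definition of R^J every
   reaction of S has support disjoint from X_i, hence so does supp(S).
   Since s(R^J \<inter> R_J) \<subseteq> R^J \<inter> R_J, combining both facts gives the theorem. *)

lemma closure_mono:
  assumes "A \<subseteq> B"
  shows "closure rho pi A F \<subseteq> closure rho pi B F"
  unfolding closure_def using assms by (intro Inter_anti_mono) auto

lemma RAF_subset_maxRAF:
  assumes "R' \<subseteq> Rs" and "is_RAF R rho pi C F R'"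
  shows "R' \<subseteq> maxRAF R rho pi C F Rs"
  unfolding maxRAF_def using assms by blast

lemma maxRAF_subset:
  "maxRAF R rho pi C F Rs \<subseteq> Rs"
  "maxRAF R rho pi C F Rs \<subseteq> R"
  unfolding maxRAF_def is_RAF_def by (rule Union_least; simp)+

text \<open>A union of RAFs is an RAF: each reaction is supported and catalysed already
  within the closure of the RAF it comes from, which grows with the reaction set.\<close>
lemma maxRAF_is_RAF:
  assumes "maxRAF R rho pi C F Rs \<noteq> {}"
  shows "is_RAF R rho pi C F (maxRAF R rho pi C F Rs)"
proof -
  let ?M = "maxRAF R rho pi C F Rs"
  have "rho r \<subseteq> closure rho pi ?M F \<and> (\<exists>x\<in>closure rho pi ?M F. (x, r) \<in> C)"
    if "r \<in> ?M" for r
  proof -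
    from that obtain R' where R': "R' \<subseteq> Rs" "is_RAF R rho pi C F R'" "r \<in> R'"
      unfolding maxRAF_def by blast
    have grow: "closure rho pi R' F \<subseteq> closure rho pi ?M F"
      using closure_mono RAF_subset_maxRAF[OF R'(1,2)] .
    from R'(2,3) have "rho r \<subseteq> closure rho pi R' F"
      and "\<exists>x\<in>closure rho pi R' F. (x, r) \<in> C"
      unfolding is_RAF_def by blast+
    with grow show ?thesis by blast
  qed
  with assms maxRAF_subset(2)[of R rho pi C F Rs] show ?thesis
    unfolding is_RAF_def by blast
qed

text \<open>Condition (u-2) holds for every set of reactions inside \<open>R\<^sup>J \<inter> R\<^sub>J\<close>: meeting
  \<open>R\<^sub>i\<close> forces \<open>i \<notin> J\<close>, and then all supports avoid \<open>X\<^sub>i\<close>.\<close>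
lemma uninhibited_inside_R_upper_lower:
  assumes S: "S \<subseteq> R_upper R rho pi k Xi J \<inter> R_lower R Ri J"
    and i: "i \<in> {1..k}"
    and meets: "S \<inter> Ri i \<noteq> {}"
  shows "supp_set rho pi S \<inter> Xi i = {}"
proof -
  from meets obtain r where "r \<in> S" "r \<in> Ri i" by blast
  with S have i_notin_J: "i \<notin> J"
    unfolding R_lower_def by blast
  have "supp rho pi r' \<inter> Xi i = {}" if "r' \<in> S" for r'
    using that S i i_notin_J unfolding R_upper_def by blast
  then show ?thesis
    unfolding supp_set_def by blast
qed

theorem theorem1:
  fixes X :: "'x set" and R :: "'r set" and rho pi :: "'r \<Rightarrow> 'x set"
    and C :: "('x \<times> 'r) set" and F :: "'x set"
    and k :: nat and Xi :: "nat \<Rightarrow> 'x set" and Ri :: "nat \<Rightarrow> 'r set" and J :: "nat set"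
  assumes "CRS X R rho pi C F"
    and "\<forall>i\<in>{1..k}. Xi i \<subseteq> X \<and> Ri i \<subseteq> R"
    and "J \<subseteq> {1..k}"
    and "maxRAF R rho pi C F (R_upper R rho pi k Xi J \<inter> R_lower R Ri J) \<noteq> {}"
  shows "is_uRAF R rho pi C F k Xi Ri (maxRAF R rho pi C F (R_upper R rho pi k Xi J \<inter> R_lower R Ri J))"
proof -
  let ?M = "maxRAF R rho pi C F (R_upper R rho pi k Xi J \<inter> R_lower R Ri J)"
  have "is_RAF R rho pi C F ?M"
    using maxRAF_is_RAF assms(4) .
  moreover have "supp_set rho pi ?M \<inter> Xi i = {}" if "i \<in> {1..k}" "?M \<inter> Ri i \<noteq> {}" for i
    using uninhibited_inside_R_upper_lower[OF maxRAF_subset(1) that] .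
  ultimately show ?thesis
    unfolding is_uRAF_def by simp
qed

end
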